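(* If $t_1$ and $t_2$ are connected CCSK$^{\mathrm P}$ transitions (resp. connected CCSK transitions), then exactly one of $t_1\mathrel{\iota}t_2$ and $t_1\otimes t_2$ holds.
   Context: Names $\mathsf N$ with a bijection $\overline{\cdot}$ onto disjoint co-names; labels $\mathsf L=\mathsf N\cup\overline{\mathsf N}\cup\{\tau\}$ ($\alpha$ over $\mathsf L$, $\lambda$ over $\mathsf L\setminus\{\tau\}$, $\overline\tau=\tau$); $\mathsf K$ a denumerable set of keys. CCSK processes: $X,Y::=\mathbf 0\mid\alpha.X\mid X\backslash\lambda\mid X+Y\mid X|Y\mid\alpha[k].X$; $\mathrm{keys}(X)$ = keys occurring in $X$; standard means $\mathrm{keys}(X)=\emptyset$. Directions $D\in\{\mathrm L,\mathrm R\}$, $\bar{\mathrm L}=\mathrm R$, $\bar{\mathrm R}=\mathrm L$. Proof keyed labels: $\theta::=\upsilon\alpha[k]\mid\upsilon\langle\upsilon_1\lambda[k],\upsilon_2\overline\lambda[k]\rangle$, $\upsilon,\upsilon_i\in\{|_{\mathrm L},|_{\mathrm R},+_{\mathrm L},+_{\mathrm R}\}^*$; $\ell(\upsilon\alpha[k])=\alpha$, $\ell(\upsilon\langle\cdots\rangle)=\tau$, $\mathrm{key}(\theta)=k$. Forward CCSK$^{\mathrm P}$ transitions $X\xrightarrow\theta X'$: least relation closed under (act) $\alpha.X\xrightarrow{\alpha[k]}\alpha[k].X$ if $\mathrm{keys}(X)=\emptyset$; (pre) $X\xrightarrow\theta X'$, $\mathrm{key}(\theta)\neq k$ $\Rightarrow$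 $\alpha[k].X\xrightarrow\theta\alpha[k].X'$; (res) $X\xrightarrow\theta X'$, $\ell(\theta)\notin\{\lambda,\overline\lambda\}$ $\Rightarrow$ $X\backslash\lambda\xrightarrow\theta X'\backslash\lambda$; (par) $X\xrightarrow\theta X'$, $\mathrm{key}(\theta)\notin\mathrm{keys}(Y)$ $\Rightarrow$ $X|Y\xrightarrow{|_{\mathrm L}\theta}X'|Y$ and $Y|X\xrightarrow{|_{\mathrm R}\theta}Y|X'$; (syn) $X\xrightarrow{\upsilon_1\lambda[k]}X'$, $Y\xrightarrow{\upsilon_2\overline\lambda[k]}Y'$ $\Rightarrow$ $X|Y\xrightarrow{\langle\upsilon_1\lambda[k],\upsilon_2\overline\lambda[k]\rangle}X'|Y'$; (sum) $X\xrightarrow\theta X'$, $\mathrm{keys}(Y)=\emptyset$ $\Rightarrow$ $X+Y\xrightarrow{+_{\mathrm L}\theta}X'+Y$ and $Y+X\xrightarrow{+_{\mathrm R}\theta}Y+X'$. Backward transitions are the converse of forward ones (same label). Paths are sequences of composable (forward or backward) transitions; only processes reachable by a path from a standard process are considered. Transitions are connected if there is a path from the source of one to the target of the other. CCSK has the same processes and, for each CCSK$^{\mathrm P}$ transition with label $\theta$, a transition between the same processes with label $\ell(\theta)[\mathrm{key}(\theta)]$; this is a bijection between transitions, and $\hat t$ denotes the CCSK$^{\mathrm P}$ transition corresponding to a CCSK transition $t$. Relations on proof labels (least closed under the rules; "prefix" = form $\beta[k']$; $\theta_{\mathrm L},\theta_{\mathrm R}$ components of a synchronisation label): Connectivity $\frown$: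 (A1) $\alpha[k]\frown\theta$; (A2) $\theta\frown\alpha[k]$ if $\theta$ not a prefix; (P1) $|_D\theta\frown|_D\theta'$ if $\theta\frown\theta'$; (P2) $|_D\theta\frown|_{\bar D}\theta'$; (C1) $+_D\theta\frown+_D\theta'$ if $\theta\frown\theta'$; (C2) $+_D\theta\frown+_{\bar D}\theta'$; (S1) $|_D\theta\frown\langle\theta_{\mathrm L},\theta_{\mathrm R}\rangle$ if $\theta\frown\theta_D$; (S2) $\langle\theta_{\mathrm L},\theta_{\mathrm R}\rangle\frown|_D\theta$ if $\theta_D\frown\theta$; (S3) $\langle\theta_1,\theta_2\rangle\frown\langle\theta_1',\theta_2'\rangle$ if $\theta_1\frown\theta_1'$, $\theta_2\frown\theta_2'$. Dependence $\otimes$: A1, A2, C1, C2, P1, S1, S2 with $\otimes$ in place of $\frown$; (P2$_k$) $|_D\theta\otimes|_{\bar D}\theta'$ if $\mathrm{key}(\theta)=\mathrm{key}(\theta')$; (S3) $\langle\theta_1,\theta_2\rangle\otimes\langle\theta_1',\theta_2'\rangle$ if for some $i\ne j$, $\theta_i\otimes\theta_i'$ and $\theta_j\frown\theta_j'$. Independence $\iota$: C1, P1, S1, S2, S3 with $\iota$ in place of $\frown$, plus (P2$_k$) $|_D\theta\mathrel\iota|_{\bar D}\theta'$ if $\mathrm{key}(\theta)\ne\mathrm{key}(\theta')$. On CCSK$^{\mathrm P}$ transitions: $t_1\mathrel\iota t_2$ iff $t_1,t_2$ are connected and their labels satisfy $\iota$; likewise for $\otimes$. On CCSK transitions: $t_1\mathrel\iota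 t_2$ iff $t_1,t_2$ are connected and the labels of $\hat t_1,\hat t_2$ satisfy $\iota$; likewise for $\otimes$. *)

theory Defs
  imports Main
begin

datatype 'n vis = Nm 'n | CoNm 'n

fun vbar :: "'n vis \<Rightarrow> 'n vis" where
  "vbar (Nm a) = CoNm a"
| "vbar (CoNm a) = Nm a"

datatype 'n lab = Vis "'n vis" | Tau

type_synonym key = nat

datatype 'n proc =
    Nil
  | Pref "'n lab" "'n proc"
  | Res "'n proc" "'n vis"
  | Sum "'n proc" "'n proc"
  | Par "'n proc" "'n proc"
  | KPref "'n lab" key "'n proc"

fun keys :: "'n proc \<Rightarrow> key set" where
  "keys Nil = {}"
| "keys (Pref a X) = keys X"
| "keys (Res X l) = keys X"
| "keys (Sum X Y) = keys X \<union> keys Y"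
| "keys (Par X Y) = keys X \<union> keys Y"
| "keys (KPref a k X) = insert k (keys X)"

definition standard :: "'n proc \<Rightarrow> bool" where
  "standard X \<longleftrightarrow> keys X = {}"

datatype dir = DL | DR

fun dbar :: "dir \<Rightarrow> dir" where
  "dbar DL = DR"
| "dbar DR = DL"

text \<open>Act a k = alpha[k]; PrL D th = |_D th; SmL D th = +_D th; Syn th1 th2 = <th1, th2>.
  A label upsilon alpha[k] is a string of PrL/SmL around an Act;
  upsilon <...> is a string of PrL/SmL around a Syn.\<close>
datatype 'n theta =
    Act "'n lab" key
  | PrL dir "'n theta"
  | SmL dir "'n theta"
  | Syn "'n theta" "'n theta"

fun lbl :: "'n theta \<Rightarrow> 'n lab" where
  "lbl (Act a k) = a"
| "lbl (PrL d th) = lbl th"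
| "lbl (SmL d th) = lbl th"
| "lbl (Syn th1 th2) = Tau"

fun key :: "'n theta \<Rightarrow> key" where
  "key (Act a k) = k"
| "key (PrL d th) = key th"
| "key (SmL d th) = key th"
| "key (Syn th1 th2) = key th1"

fun is_prefix :: "'n theta \<Rightarrow> bool" where
  "is_prefix (Act a k) = True"
| "is_prefix _ = False"

fun comp :: "dir \<Rightarrow> 'n theta \<Rightarrow> 'n theta \<Rightarrow> 'n theta" where
  "comp DL thL thR = thL"
| "comp DR thL thR = thR"

inductive fwd :: "'n proc \<Rightarrow> 'n theta \<Rightarrow> 'n proc \<Rightarrow> bool" where
  act: "keys X = {} \<Longrightarrow> fwd (Pref a X) (Act a k) (KPref a k X)"
| pre: "fwd X th X' \<Longrightarrow> key th \<noteq> k \<Longrightarrow> fwd (KPref a k X) th (KPref a k X')"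
| res: "fwd X th X' \<Longrightarrow> lbl th \<notin> {Vis l, Vis (vbar l)} \<Longrightarrow> fwd (Res X l) th (Res X' l)"
| parL: "fwd X th X' \<Longrightarrow> key th \<notin> keys Y \<Longrightarrow> fwd (Par X Y) (PrL DL th) (Par X' Y)"
| parR: "fwd X th X' \<Longrightarrow> key th \<notin> keys Y \<Longrightarrow> fwd (Par Y X) (PrL DR th) (Par Y X')"
| syn: "fwd X th1 X' \<Longrightarrow> fwd Y th2 Y' \<Longrightarrow> lbl th1 = Vis l \<Longrightarrow> lbl th2 = Vis (vbar l)
        \<Longrightarrow> key th1 = k \<Longrightarrow> key th2 = k \<Longrightarrow> fwd (Par X Y) (Syn th1 th2) (Par X' Y')"
| sumL: "fwd X th X' \<Longrightarrow> keys Y = {} \<Longrightarrow> fwd (Sum X Y) (SmL DL th) (Sum X' Y)"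
| sumR: "fwd X th X' \<Longrightarrow> keys Y = {} \<Longrightarrow> fwd (Sum Y X) (SmL DR th) (Sum Y X')"

definition step :: "'n proc \<Rightarrow> 'n proc \<Rightarrow> bool" where
  "step X Y \<longleftrightarrow> (\<exists>th. fwd X th Y \<or> fwd Y th X)"

definition path :: "'n proc \<Rightarrow> 'n proc \<Rightarrow> bool" where
  "path X Y \<longleftrightarrow> step\<^sup>*\<^sup>* X Y"

definition reachable :: "'n proc \<Rightarrow> bool" where
  "reachable X \<longleftrightarrow> (\<exists>X0. standard X0 \<and> path X0 X)"

text \<open>A CCSK^P transition: (source, label, target, is_forward).\<close>
type_synonym 'n ptrans = "'n proc \<times> 'n theta \<times> 'n proc \<times> bool"

fun is_ptrans :: "'n ptrans \<Rightarrow> bool" where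
  "is_ptrans (X, th, Y, True) = fwd X th Y"
| "is_ptrans (X, th, Y, False) = fwd Y th X"

fun psrc :: "'n ptrans \<Rightarrow> 'n proc" where "psrc (X, th, Y, b) = X"
fun ptgt :: "'n ptrans \<Rightarrow> 'n proc" where "ptgt (X, th, Y, b) = Y"
fun plab :: "'n ptrans \<Rightarrow> 'n theta" where "plab (X, th, Y, b) = th"

definition pconnected :: "'n ptrans \<Rightarrow> 'n ptrans \<Rightarrow> bool" where
  "pconnected t1 t2 \<longleftrightarrow> path (psrc t1) (ptgt t2)"

inductive conn :: "'n theta \<Rightarrow> 'n theta \<Rightarrow> bool" where
  A1: "conn (Act a k) th"
| A2: "\<not> is_prefix th \<Longrightarrow> conn th (Act a k)"
| P1: "conn th th' \<Longrightarrow> conn (PrL D th) (PrL D th')"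
| P2: "conn (PrL D th) (PrL (dbar D) th')"
| C1: "conn th th' \<Longrightarrow> conn (SmL D th) (SmL D th')"
| C2: "conn (SmL D th) (SmL (dbar D) th')"
| S1: "conn th (comp D thL thR) \<Longrightarrow> conn (PrL D th) (Syn thL thR)"
| S2: "conn (comp D thL thR) th \<Longrightarrow> conn (Syn thL thR) (PrL D th)"
| S3: "conn th1 th1' \<Longrightarrow> conn th2 th2' \<Longrightarrow> conn (Syn th1 th2) (Syn th1' th2')"

inductive dep :: "'n theta \<Rightarrow> 'n theta \<Rightarrow> bool" where
  A1: "dep (Act a k) th"
| A2: "\<not> is_prefix th \<Longrightarrow> dep th (Act a k)"
| P1: "dep th th' \<Longrightarrow> dep (PrL D th) (PrL D th')"
| P2k: "key th = key th' \<Longrightarrow> dep (PrL D th) (PrL (dbar D) th')"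
| C1: "dep th th' \<Longrightarrow> dep (SmL D th) (SmL D th')"
| C2: "dep (SmL D th) (SmL (dbar D) th')"
| S1: "dep th (comp D thL thR) \<Longrightarrow> dep (PrL D th) (Syn thL thR)"
| S2: "dep (comp D thL thR) th \<Longrightarrow> dep (Syn thL thR) (PrL D th)"
| S3a: "dep th1 th1' \<Longrightarrow> conn th2 th2' \<Longrightarrow> dep (Syn th1 th2) (Syn th1' th2')"
| S3b: "dep th2 th2' \<Longrightarrow> conn th1 th1' \<Longrightarrow> dep (Syn th1 th2) (Syn th1' th2')"

inductive indep :: "'n theta \<Rightarrow> 'n theta \<Rightarrow> bool" where
  P1: "indep th th' \<Longrightarrow> indep (PrL D th) (PrL D th')"
| P2k: "key th \<noteq> key th' \<Longrightarrow> indep (PrL D th) (PrL (dbar D) th')"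
| C1: "indep th th' \<Longrightarrow> indep (SmL D th) (SmL D th')"
| S1: "indep th (comp D thL thR) \<Longrightarrow> indep (PrL D th) (Syn thL thR)"
| S2: "indep (comp D thL thR) th \<Longrightarrow> indep (Syn thL thR) (PrL D th)"
| S3: "indep th1 th1' \<Longrightarrow> indep th2 th2' \<Longrightarrow> indep (Syn th1 th2) (Syn th1' th2')"

definition pindep :: "'n ptrans \<Rightarrow> 'n ptrans \<Rightarrow> bool" where
  "pindep t1 t2 \<longleftrightarrow> pconnected t1 t2 \<and> indep (plab t1) (plab t2)"

definition pdep :: "'n ptrans \<Rightarrow> 'n ptrans \<Rightarrow> bool" where
  "pdep t1 t2 \<longleftrightarrow> pconnected t1 t2 \<and> dep (plab t1) (plab t2)"

text \<open>A CCSK transition: (source, (alpha, k), target, is_forward); it exists iff some CCSK^P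
  transition between the same processes, in the same direction, has a label theta with
  lbl theta = alpha and key theta = k.\<close>
type_synonym 'n ctrans = "'n proc \<times> ('n lab \<times> key) \<times> 'n proc \<times> bool"

fun is_ctrans :: "'n ctrans \<Rightarrow> bool" where
  "is_ctrans (X, (a, k), Y, b) \<longleftrightarrow> (\<exists>th. is_ptrans (X, th, Y, b) \<and> lbl th = a \<and> key th = k)"

text \<open>hat t: the corresponding CCSK^P transition (unique by the bijection).\<close>
fun hat :: "'n ctrans \<Rightarrow> 'n ptrans" where
  "hat (X, (a, k), Y, b) =
     (X, (THE th. is_ptrans (X, th, Y, b) \<and> lbl th = a \<and> key th = k), Y, b)"

fun csrc :: "'n ctrans \<Rightarrow> 'n proc" where "csrc (X, l, Y, b) = X"
fun ctgt :: "'n ctrans \<Rightarrow> 'n proc" where "ctgt (X, l, Y, b) = Y"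

definition cconnected :: "'n ctrans \<Rightarrow> 'n ctrans \<Rightarrow> bool" where
  "cconnected t1 t2 \<longleftrightarrow> path (csrc t1) (ctgt t2)"

definition cindep :: "'n ctrans \<Rightarrow> 'n ctrans \<Rightarrow> bool" where
  "cindep t1 t2 \<longleftrightarrow> cconnected t1 t2 \<and> indep (plab (hat t1)) (plab (hat t2))"

definition cdep :: "'n ctrans \<Rightarrow> 'n ctrans \<Rightarrow> bool" where
  "cdep t1 t2 \<longleftrightarrow> cconnected t1 t2 \<and> dep (plab (hat t1)) (plab (hat t2))"

end

theory Submission
  imports Defs
begin

(* Keys only decorate a process: forgetting them is invariant along transitions, so two
   connected transitions both act on the same standard process P.  The label of a transition
   records the path to a prefix of P (predicate fits), and on two such positions of the same
   process the rules of independence and dependence are complementary, by induction on P;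
   in particular the side condition of rule S3 of dependence, connectivity of the other
   components, always holds there. *)

fun erase_keys :: "'n proc \<Rightarrow> 'n proc" where
  "erase_keys Nil = Nil"
| "erase_keys (Pref a X) = Pref a (erase_keys X)"
| "erase_keys (Res X l) = Res (erase_keys X) l"
| "erase_keys (Sum X Y) = Sum (erase_keys X) (erase_keys Y)"
| "erase_keys (Par X Y) = Par (erase_keys X) (erase_keys Y)"
| "erase_keys (KPref a k X) = Pref a (erase_keys X)"

(* Rule fPref: labels pass unchanged through a keyed prefix (rule pre), which erases to a
   plain prefix. *)
inductive fits :: "'n proc \<Rightarrow> 'n theta \<Rightarrow> bool" where
  fAct: "fits (Pref a P) (Act b k)"
| fPref: "fits P th \<Longrightarrow> fits (Pref a P) th"
| fRes: "fits P th \<Longrightarrow> fits (Res P l) th"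
| fParL: "fits P th \<Longrightarrow> fits (Par P Q) (PrL DL th)"
| fParR: "fits Q th \<Longrightarrow> fits (Par P Q) (PrL DR th)"
| fSyn: "fits P th1 \<Longrightarrow> fits Q th2 \<Longrightarrow> fits (Par P Q) (Syn th1 th2)"
| fSumL: "fits P th \<Longrightarrow> fits (Sum P Q) (SmL DL th)"
| fSumR: "fits Q th \<Longrightarrow> fits (Sum P Q) (SmL DR th)"

inductive_cases fitsE:
  "fits Nil th" "fits (Pref a P) th" "fits (Res P l) th" "fits (Par P Q) th" "fits (Sum P Q) th"
  "fits (KPref a k P) th"

lemma fwd_erase_keys_eq: "fwd X th Y \<Longrightarrow> erase_keys X = erase_keys Y"
  by (induction rule: fwd.induct) auto

lemma fwd_fits_erase_keys: "fwd X th Y \<Longrightarrow> fits (erase_keys X) th"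
  by (induction rule: fwd.induct) (auto intro: fits.intros)

lemma path_erase_keys_eq: "path X Y \<Longrightarrow> erase_keys X = erase_keys Y"
  unfolding path_def
proof (induction rule: rtranclp_induct)
  case (step Y Z)
  then show ?case
    unfolding step_def by (metis fwd_erase_keys_eq)
qed simp

lemma fwd_key_added: "fwd X th Y \<Longrightarrow> key th \<notin> keys X \<and> key th \<in> keys Y"
  by (induction rule: fwd.induct) auto

lemma fwd_source_neq_target: "fwd X th Y \<Longrightarrow> X \<noteq> Y"
  using fwd_key_added by blast

lemma fwd_label_unique: "fwd X th1 Y \<Longrightarrow> fwd X th2 Y \<Longrightarrow> th1 = th2"
proof (induction arbitrary: th2 rule: fwd.induct)
  case act
  then show ?case by (auto elim: fwd.cases)
next
  case (pre X th X' k a)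
  from pre.prems show ?case
    by (cases rule: fwd.cases) (auto intro: pre.IH)
next
  case (res X th X' l)
  from res.prems show ?case
    by (cases rule: fwd.cases) (auto intro: res.IH)
next
  case (parL X th X' Y)
  from parL.prems show ?case
    by (cases rule: fwd.cases) (auto intro: parL.IH dest: fwd_source_neq_target)
next
  case (parR X th X' Y)
  from parR.prems show ?case
    by (cases rule: fwd.cases) (auto intro: parR.IH dest: fwd_source_neq_target)
next
  case (syn X th1 X' Y th2 Y' l k)
  from syn.prems show ?case
    using syn.hyps by (cases rule: fwd.cases) (auto intro: syn.IH dest: fwd_source_neq_target)
next
  case (sumL X th X' Y)
  from sumL.prems show ?case
    by (cases rule: fwd.cases) (auto intro: sumL.IH dest: fwd_source_neq_target)
next
  case (sumR X th X' Y)
  from sumR.prems show ?case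
    by (cases rule: fwd.cases) (auto intro: sumR.IH dest: fwd_source_neq_target)
qed

inductive_cases indep_ActE: "indep (Act a k) th" "indep th (Act a k)"
inductive_cases indep_consE:
  "indep (PrL D th) (PrL D' th')" "indep (SmL D th) (SmL D' th')"
  "indep (PrL D th) (Syn th1 th2)" "indep (Syn th1 th2) (PrL D th)"
  "indep (Syn th1 th2) (Syn th1' th2')"
inductive_cases dep_consE:
  "dep (PrL D th) (PrL D' th')" "dep (SmL D th) (SmL D' th')"
  "dep (PrL D th) (Syn th1 th2)" "dep (Syn th1 th2) (PrL D th)"
  "dep (Syn th1 th2) (Syn th1' th2')"

lemma not_indep_Act_left [simp]: "\<not> indep (Act a k) th"
  by (auto elim: indep_ActE)

lemma not_indep_Act_right [simp]: "\<not> indep th (Act a k)"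
  by (auto elim: indep_ActE)

lemma dep_Act_left [simp]: "dep (Act a k) th"
  by (rule dep.A1)

lemma dep_Act_right [simp]: "dep th (Act a k)"
  by (cases th) (auto intro: dep.intros)

lemma conn_Act_right: "conn th (Act a k)"
  by (cases th) (auto intro: conn.intros)

lemma indep_PrL_PrL_iff:
  "indep (PrL D th) (PrL D' th') \<longleftrightarrow>
     D = D' \<and> indep th th' \<or> D' = dbar D \<and> key th \<noteq> key th'"
  by (auto elim!: indep_consE intro: indep.intros)

lemma dep_PrL_PrL_iff:
  "dep (PrL D th) (PrL D' th') \<longleftrightarrow> D = D' \<and> dep th th' \<or> D' = dbar D \<and> key th = key th'"
  by (auto elim!: dep_consE intro: dep.intros)

lemma indep_SmL_SmL_iff: "indep (SmL D th) (SmL D' th') \<longleftrightarrow> D = D' \<and> indep th th'"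
  by (auto elim!: indep_consE intro: indep.intros)

lemma dep_SmL_SmL_iff: "dep (SmL D th) (SmL D' th') \<longleftrightarrow> D = D' \<and> dep th th' \<or> D' = dbar D"
  by (auto elim!: dep_consE intro: dep.intros)

lemma indep_PrL_Syn_iff: "indep (PrL D th) (Syn th1 th2) \<longleftrightarrow> indep th (comp D th1 th2)"
  by (auto elim!: indep_consE intro: indep.intros)

lemma dep_PrL_Syn_iff: "dep (PrL D th) (Syn th1 th2) \<longleftrightarrow> dep th (comp D th1 th2)"
  by (auto elim!: dep_consE intro: dep.intros)

lemma indep_Syn_PrL_iff: "indep (Syn th1 th2) (PrL D th) \<longleftrightarrow> indep (comp D th1 th2) th"
  by (auto elim!: indep_consE intro: indep.intros)

lemma dep_Syn_PrL_iff: "dep (Syn th1 th2) (PrL D th) \<longleftrightarrow> dep (comp D th1 th2) th"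
  by (auto elim!: dep_consE intro: dep.intros)

lemma indep_Syn_Syn_iff: "indep (Syn th1 th2) (Syn th1' th2') \<longleftrightarrow> indep th1 th1' \<and> indep th2 th2'"
  by (auto elim!: indep_consE intro: indep.intros)

lemma dep_Syn_Syn_iff:
  "dep (Syn th1 th2) (Syn th1' th2') \<longleftrightarrow>
     dep th1 th1' \<and> conn th2 th2' \<or> dep th2 th2' \<and> conn th1 th1'"
  by (auto elim!: dep_consE intro: dep.intros)

lemmas indep_dep_cons_iffs =
  indep_PrL_PrL_iff dep_PrL_PrL_iff indep_SmL_SmL_iff dep_SmL_SmL_iff
  indep_PrL_Syn_iff dep_PrL_Syn_iff indep_Syn_PrL_iff dep_Syn_PrL_iff
  indep_Syn_Syn_iff dep_Syn_Syn_iff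

lemma fits_conn: "fits P th \<Longrightarrow> fits P th' \<Longrightarrow> conn th th'"
proof (induction P arbitrary: th th')
  case (Pref a P)
  from Pref.prems show ?case
    by (auto elim!: fitsE intro: conn.intros conn_Act_right Pref.IH)
next
  case (Par P Q)
  from Par.prems show ?case
    using conn.P2[of DL] conn.P2[of DR]
    by (auto elim!: fitsE intro!: conn.intros intro: Par.IH)
next
  case (Sum P Q)
  from Sum.prems show ?case
    using conn.C2[of DL] conn.C2[of DR]
    by (auto elim!: fitsE intro!: conn.intros intro: Sum.IH)
qed (auto elim!: fitsE)

lemma fits_indep_iff_not_dep: "fits P th \<Longrightarrow> fits P th' \<Longrightarrow> indep th th' \<longleftrightarrow> \<not> dep th th'"
proof (induction P arbitrary: th th')
  case (Pref a P)
  from Pref.prems show ?case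
    by (auto elim!: fitsE dest: Pref.IH)
next
  case (Par P Q)
  from Par.prems show ?case
    by (auto elim!: fitsE simp: indep_dep_cons_iffs dest: Par.IH fits_conn)
next
  case (Sum P Q)
  from Sum.prems show ?case
    by (auto elim!: fitsE simp: indep_dep_cons_iffs dest: Sum.IH)
qed (auto elim!: fitsE)

lemma is_ptrans_erase_keys_eq: "is_ptrans t \<Longrightarrow> erase_keys (psrc t) = erase_keys (ptgt t)"
  by (cases t rule: is_ptrans.cases) (auto dest: fwd_erase_keys_eq)

lemma is_ptrans_fits: "is_ptrans t \<Longrightarrow> fits (erase_keys (psrc t)) (plab t)"
  by (cases t rule: is_ptrans.cases) (auto simp flip: fwd_erase_keys_eq intro: fwd_fits_erase_keys)

lemma connected_ptrans_indep_iff_not_dep: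
  assumes "is_ptrans t1" and "is_ptrans t2" and "path (psrc t1) (ptgt t2)"
  shows "indep (plab t1) (plab t2) \<longleftrightarrow> \<not> dep (plab t1) (plab t2)"
proof -
  have "erase_keys (psrc t1) = erase_keys (psrc t2)"
    using assms path_erase_keys_eq is_ptrans_erase_keys_eq by metis
  then have "fits (erase_keys (psrc t1)) (plab t1)" and "fits (erase_keys (psrc t1)) (plab t2)"
    using assms is_ptrans_fits by metis+
  then show ?thesis
    by (rule fits_indep_iff_not_dep)
qed

lemma psrc_hat [simp]: "psrc (hat t) = csrc t"
  by (cases t) auto

lemma ptgt_hat [simp]: "ptgt (hat t) = ctgt t"
  by (cases t) auto

lemma is_ptrans_hat: "is_ctrans t \<Longrightarrow> is_ptrans (hat t)"
proof -
  assume "is_ctrans t"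
  obtain X a k Y b where t: "t = (X, (a, k), Y, b)"
    by (cases t) auto
  with \<open>is_ctrans t\<close> obtain th where th: "is_ptrans (X, th, Y, b)" "lbl th = a" "key th = k"
    by auto
  have label_unique: "th' = th" if "is_ptrans (X, th', Y, b)" for th'
    using that th(1) by (cases b) (auto intro: fwd_label_unique)
  have "(THE th. is_ptrans (X, th, Y, b) \<and> lbl th = a \<and> key th = k) = th"
    using th label_unique by (intro the_equality) blast+
  then show ?thesis
    using t th by simp
qed

theorem proposition4p8:
  shows "(\<forall>t1 t2 :: 'n ptrans.
            is_ptrans t1 \<and> is_ptrans t2 \<and> reachable (psrc t1) \<and> reachable (psrc t2)
            \<and> pconnected t1 t2
            \<longrightarrow> (pindep t1 t2 \<longleftrightarrow> \<not> pdep t1 t2))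
       \<and> (\<forall>t1 t2 :: 'n ctrans.
            is_ctrans t1 \<and> is_ctrans t2 \<and> reachable (csrc t1) \<and> reachable (csrc t2)
            \<and> cconnected t1 t2
            \<longrightarrow> (cindep t1 t2 \<longleftrightarrow> \<not> cdep t1 t2))"
proof (intro conjI allI impI)
  fix t1 t2 :: "'n ptrans"
  assume "is_ptrans t1 \<and> is_ptrans t2 \<and> reachable (psrc t1) \<and> reachable (psrc t2)
    \<and> pconnected t1 t2"
  then show "pindep t1 t2 \<longleftrightarrow> \<not> pdep t1 t2"
    unfolding pindep_def pdep_def pconnected_def
    using connected_ptrans_indep_iff_not_dep by blast
next
  fix t1 t2 :: "'n ctrans"
  assume "is_ctrans t1 \<and> is_ctrans t2 \<and> reachable (csrc t1) \<and> reachable (csrc t2)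
    \<and> cconnected t1 t2"
  then have "is_ptrans (hat t1)" "is_ptrans (hat t2)" "path (psrc (hat t1)) (ptgt (hat t2))"
    by (auto simp: cconnected_def intro: is_ptrans_hat)
  then show "cindep t1 t2 \<longleftrightarrow> \<not> cdep t1 t2"
    unfolding cindep_def cdep_def cconnected_def
    using connected_ptrans_indep_iff_not_dep by fastforce
qed

end
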